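(* Let $G$ be a map graph with a corresponding planar bipartite graph $B$, let $k$ be a positive integer, let $\mathcal{D}=(T,\beta_{\mathcal{D}})$ be a nice tree decomposition of $B$ of width less than $5\sqrt{2k}$, and let $\mathcal{D}'=(T,\beta_{\mathcal{D}'})$ be the tree decomposition of $G$ derived from $\mathcal{D}$. Let $C$ be a cycle in $G$ and let $K$ be a special clique of $G$. Then there is a cycle $C'$ in $G$ of the same length as $C$ such that $E(C')\setminus E(K)=E(C)\setminus E(K)$ and, for every node $t\in V(T)$, the number of edges of $E(C')\cap E(K)$ with one endpoint in $\mathsf{Fake}(t)\cap K$ and the other in $V(G)\setminus\gamma_{\mathcal{D}'}(t)$ is at most $4$.
   Context: All graphs are finite and simple; $E(K)$ denotes the set of edges of $G$ with both endpoints in $K$. For a bipartite graph $B$ with bipartition $V(B)=W\uplus U$, the half-square of $B$ is the graph on $W$ in which two vertices are adjacent iff they are at distance exactly $2$ in $B$. A graph $G$ is a map graph iff it is the half-square of some planar bipartite graph $B$; such $B$ (with $W=V(G)$) is a corresponding planar bipartite graph, and $S(G)=U$ is the set of special vertices; for $s\in S(G)$, $N_B(s)$ is a clique of $G$ called a special clique. A tree decomposition $(T,\beta)$: rooted tree, bags covering all vertices and edges, each vertex's nodes inducing a connected subtree; width is max bag size minus one. $\gamma_{\mathcal{D}}(t)$ (resp. $\gamma_{\mathcal{D}'}(t)$) is the union of bags at $t$ and its descendants. A nice tree decomposition has empty root bag and leaf, introduce, forget and join nodes in the standard sense. The derived decomposition has the same tree and bags $\beta_{\mathcal{D}'}(t)=(\beta_{\mathcal{D}}(t)\cap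 V(G))\cup\bigcup_{s\in\beta_{\mathcal{D}}(t)\cap S(G)}(N_B(s)\cap\gamma_{\mathcal{D}}(t))$, and $\mathsf{Fake}(t)=\beta_{\mathcal{D}'}(t)\setminus\beta_{\mathcal{D}}(t)$. *)

theory Defs
  imports "HOL-Analysis.Analysis"
begin

definition nbhd :: "'v set set \<Rightarrow> 'v \<Rightarrow> 'v set" where
  "nbhd E x = {y. {x, y} \<in> E}"

definition edges_within :: "'v set set \<Rightarrow> 'v set \<Rightarrow> 'v set set" where
  "edges_within E K = {e \<in> E. e \<subseteq> K}"

definition is_cycle :: "'v set \<Rightarrow> 'v set set \<Rightarrow> 'v list \<Rightarrow> bool" where
  "is_cycle V E cs \<longleftrightarrow> length cs \<ge> 3 \<and> distinct cs \<and> set cs \<subseteq> V \<and>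
     (\<forall>i < length cs. {cs ! i, cs ! ((i + 1) mod length cs)} \<in> E)"

definition cycle_edges :: "'v list \<Rightarrow> 'v set set" where
  "cycle_edges cs = {{cs ! i, cs ! ((i + 1) mod length cs)} | i. i < length cs}"

text \<open>The length of a cycle is its number of edges (= number of vertices).\<close>
definition cycle_length :: "'v list \<Rightarrow> nat" where
  "cycle_length cs = length cs"

definition bipartite_graph :: "'v set \<Rightarrow> 'v set \<Rightarrow> 'v set set \<Rightarrow> bool" where
  "bipartite_graph W U EB \<longleftrightarrow> finite W \<and> finite U \<and> W \<inter> U = {} \<and>
     EB \<subseteq> {{w, u} | w u. w \<in> W \<and> u \<in> U}"

text \<open>Planarity: a drawing in the plane (identified with \<complex>), vertices as distinct points,
  edges as arcs joining their endpoints, not passing through other vertices, and two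
  distinct arcs meet only in common endpoints.\<close>
definition planar_graph :: "'v set \<Rightarrow> 'v set set \<Rightarrow> bool" where
  "planar_graph V E \<longleftrightarrow>
     (\<exists>(pos :: 'v \<Rightarrow> complex) (crv :: 'v set \<Rightarrow> real \<Rightarrow> complex).
        inj_on pos V \<and>
        (\<forall>e \<in> E. \<exists>a b. e = {a, b} \<and> a \<in> V \<and> b \<in> V \<and> arc (crv e) \<and>
            pathstart (crv e) = pos a \<and> pathfinish (crv e) = pos b \<and>
            path_image (crv e) \<inter> pos ` V = {pos a, pos b}) \<and>
        (\<forall>e \<in> E. \<forall>e' \<in> E. e \<noteq> e' \<longrightarrow>
            path_image (crv e) \<inter> path_image (crv e') \<subseteq> pos ` (e \<inter> e')))"

text \<open>Half-square of B on W: two vertices of W adjacent iff at distance exactly 2 in B,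
  i.e. distinct, non-adjacent in B, and with a common neighbour in B.\<close>
definition half_square_edges :: "'v set \<Rightarrow> 'v set set \<Rightarrow> 'v set set" where
  "half_square_edges W EB =
     {{w, w'} | w w'. w \<in> W \<and> w' \<in> W \<and> w \<noteq> w' \<and> {w, w'} \<notin> EB \<and>
                     (\<exists>s. {w, s} \<in> EB \<and> {s, w'} \<in> EB)}"

definition rooted_tree :: "'n set \<Rightarrow> 'n \<Rightarrow> ('n \<Rightarrow> 'n) \<Rightarrow> bool" where
  "rooted_tree N r par \<longleftrightarrow> finite N \<and> r \<in> N \<and> par r = r \<and>
     (\<forall>t \<in> N. par t \<in> N \<and> (\<exists>k. (par ^^ k) t = r))"

definition tree_edges :: "'n set \<Rightarrow> 'n \<Rightarrow> ('n \<Rightarrow> 'n) \<Rightarrow> 'n set set" where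
  "tree_edges N r par = {{t, par t} | t. t \<in> N \<and> t \<noteq> r}"

definition children :: "'n set \<Rightarrow> 'n \<Rightarrow> ('n \<Rightarrow> 'n) \<Rightarrow> 'n \<Rightarrow> 'n set" where
  "children N r par t = {c \<in> N. c \<noteq> r \<and> par c = t}"

definition descendants :: "'n set \<Rightarrow> ('n \<Rightarrow> 'n) \<Rightarrow> 'n \<Rightarrow> 'n set" where
  "descendants N par t = {s \<in> N. \<exists>k. (par ^^ k) s = t}"

definition walk :: "'a set set \<Rightarrow> 'a list \<Rightarrow> bool" where
  "walk E xs \<longleftrightarrow> (\<forall>i. Suc i < length xs \<longrightarrow> {xs ! i, xs ! Suc i} \<in> E)"

definition connected_in :: "'a set set \<Rightarrow> 'a set \<Rightarrow> bool" where
  "connected_in E X \<longleftrightarrow> (\<forall>a \<in> X. \<forall>b \<in> X. \<exists>xs. xs \<noteq> [] \<and> hd xs = a \<and> last xs = b \<and>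
                                        set xs \<subseteq> X \<and> walk E xs)"

definition tree_decomposition ::
  "'v set \<Rightarrow> 'v set set \<Rightarrow> 'n set \<Rightarrow> 'n \<Rightarrow> ('n \<Rightarrow> 'n) \<Rightarrow> ('n \<Rightarrow> 'v set) \<Rightarrow> bool" where
  "tree_decomposition V E N r par bag \<longleftrightarrow>
     rooted_tree N r par \<and>
     (\<forall>t \<in> N. bag t \<subseteq> V) \<and>
     (\<forall>v \<in> V. \<exists>t \<in> N. v \<in> bag t) \<and>
     (\<forall>e \<in> E. \<exists>t \<in> N. e \<subseteq> bag t) \<and>
     (\<forall>v \<in> V. connected_in (tree_edges N r par) {t \<in> N. v \<in> bag t})"

definition td_width :: "'n set \<Rightarrow> ('n \<Rightarrow> 'v set) \<Rightarrow> real" where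
  "td_width N bag = real (Max ((\<lambda>t. card (bag t)) ` N)) - 1"

text \<open>Nice tree decomposition (convention of Cygan et al.): empty root bag, and every node is
  a leaf (no children, empty bag), an introduce node, a forget node, or a join node.\<close>
definition nice_tree_decomposition ::
  "'v set \<Rightarrow> 'v set set \<Rightarrow> 'n set \<Rightarrow> 'n \<Rightarrow> ('n \<Rightarrow> 'n) \<Rightarrow> ('n \<Rightarrow> 'v set) \<Rightarrow> bool" where
  "nice_tree_decomposition V E N r par bag \<longleftrightarrow>
     tree_decomposition V E N r par bag \<and> bag r = {} \<and>
     (\<forall>t \<in> N.
        (children N r par t = {} \<and> bag t = {}) \<or>
        (\<exists>c v. children N r par t = {c} \<and> v \<notin> bag c \<and> bag t = insert v (bag c)) \<or>
        (\<exists>c v. children N r par t = {c} \<and> v \<in> bag c \<and> bag t = bag c - {v}) \<or>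
        (\<exists>c1 c2. c1 \<noteq> c2 \<and> children N r par t = {c1, c2} \<and> bag t = bag c1 \<and> bag t = bag c2))"

definition gamma :: "'n set \<Rightarrow> ('n \<Rightarrow> 'n) \<Rightarrow> ('n \<Rightarrow> 'v set) \<Rightarrow> 'n \<Rightarrow> 'v set" where
  "gamma N par bag t = (\<Union>s \<in> descendants N par t. bag s)"

text \<open>Bags of the derived decomposition D' (W = V(G), U = S(G)).\<close>
definition derived_bag ::
  "'v set \<Rightarrow> 'v set \<Rightarrow> 'v set set \<Rightarrow> 'n set \<Rightarrow> ('n \<Rightarrow> 'n) \<Rightarrow> ('n \<Rightarrow> 'v set) \<Rightarrow> 'n \<Rightarrow> 'v set" where
  "derived_bag W U EB N par bag t =
     (bag t \<inter> W) \<union> (\<Union>s \<in> bag t \<inter> U. nbhd EB s \<inter> gamma N par bag t)"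

definition Fake ::
  "'v set \<Rightarrow> 'v set \<Rightarrow> 'v set set \<Rightarrow> 'n set \<Rightarrow> ('n \<Rightarrow> 'n) \<Rightarrow> ('n \<Rightarrow> 'v set) \<Rightarrow> 'n \<Rightarrow> 'v set" where
  "Fake W U EB N par bag t = derived_bag W U EB N par bag t - bag t"

end

theory Submission
  imports Defs
begin

text \<open>Write \<open>K\<close> for the special clique of \<open>s\<close> and \<open>A\<^sub>t = \<gamma>(t) - \<beta>(t)\<close> for the
  vertices forgotten below the node \<open>t\<close>. A fake vertex of \<open>t\<close> lies in \<open>A\<^sub>t\<close>, and a vertex of
  \<open>G\<close> outside \<open>\<gamma>'(t)\<close> lies outside \<open>\<gamma>(t)\<close>, so every counted edge is an edge of \<open>E(K)\<close>
  crossing \<open>A\<^sub>t\<close>. Since a forgotten vertex occurs only in bags below \<open>t\<close>, the sets \<open>A\<^sub>t\<close>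
  form a laminar family. Among the cycles of the same length with the same edges outside
  \<open>E(K)\<close>, take one minimising the total number of crossings between its \<open>E(K)\<close>-edges and
  the sets \<open>A\<^sub>t\<close>. If some \<open>A\<^sub>t\<close> were crossed three times, two of these edges would leave
  \<open>A\<^sub>t\<close> in the same direction along the cycle; reversing the segment between them (a 2-opt
  move, available because \<open>K\<close> is a clique) removes both crossings of \<open>A\<^sub>t\<close> and, by
  laminarity, creates no crossing with any other \<open>A\<^sub>u\<close>. So each \<open>A\<^sub>t\<close> is crossed at most
  twice, which is stronger than the bound 4.\<close>

section \<open>Edges of paths and cycles\<close>

fun path_edges :: "'a list \<Rightarrow> 'a set set" where
  "path_edges (x # y # zs) = insert {x, y} (path_edges (y # zs))"
| "path_edges _ = {}"

lemma path_edges_subset: "e \<in> path_edges xs \<Longrightarrow> e \<subseteq> set xs"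
  by (induction xs rule: path_edges.induct) auto

lemma finite_path_edges: "finite (path_edges xs)"
  by (induction xs rule: path_edges.induct) auto

lemma path_edges_conv_nth: "path_edges xs = (\<lambda>i. {xs ! i, xs ! Suc i}) ` {..<length xs - 1}"
proof (induction xs rule: path_edges.induct)
  case (1 x y zs)
  then show ?case by (simp add: lessThan_Suc_eq_insert_0 image_image)
qed auto

lemma path_edges_append:
  "xs \<noteq> [] \<Longrightarrow> ys \<noteq> [] \<Longrightarrow> path_edges (xs @ ys) = path_edges xs \<union> path_edges ys \<union> {{last xs, hd ys}}"
  by (induction xs rule: path_edges.induct) (auto simp: neq_Nil_conv)

lemma path_edges_Cons: "xs \<noteq> [] \<Longrightarrow> path_edges (x # xs) = insert {x, hd xs} (path_edges xs)"
  by (cases xs) auto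

lemma path_edges_rev: "path_edges (rev xs) = path_edges xs"
proof (induction xs)
  case (Cons x xs)
  then show ?case
    by (cases "xs = []") (auto simp: path_edges_append path_edges_Cons last_rev)
qed simp

lemma cycle_edges_conv_path_edges:
  assumes "xs \<noteq> []"
  shows "cycle_edges xs = path_edges (xs @ [hd xs])"
proof -
  let ?n = "length xs"
  have "(xs @ [hd xs]) ! i = xs ! i" "(xs @ [hd xs]) ! Suc i = xs ! ((i + 1) mod ?n)"
    if "i < ?n" for i
  proof -
    from that have "Suc i < ?n \<or> Suc i = ?n" by linarith
    then show "(xs @ [hd xs]) ! i = xs ! i" "(xs @ [hd xs]) ! Suc i = xs ! ((i + 1) mod ?n)"
      using that assms by (auto simp: nth_append hd_conv_nth)
  qed
  then have "path_edges (xs @ [hd xs]) = (\<lambda>i. {xs ! i, xs ! ((i + 1) mod ?n)}) ` {..<?n}"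
    by (simp add: path_edges_conv_nth)
  then show ?thesis
    unfolding cycle_edges_def by auto
qed

lemma finite_cycle_edges: "finite (cycle_edges cs)"
  unfolding cycle_edges_def by simp

lemma is_cycle_iff_cycle_edges:
  "is_cycle V E cs \<longleftrightarrow> 3 \<le> length cs \<and> distinct cs \<and> set cs \<subseteq> V \<and> cycle_edges cs \<subseteq> E"
  unfolding is_cycle_def cycle_edges_def by blast

lemma cycle_edges_rotate1: "cycle_edges (rotate1 xs) = cycle_edges xs"
proof (cases xs)
  case (Cons x ys)
  then show ?thesis
    by (cases "ys = []")
      (auto simp: cycle_edges_conv_path_edges path_edges_append path_edges_Cons)
qed simp

lemma cycle_edges_rotate: "cycle_edges (rotate n xs) = cycle_edges xs"
  by (induction n) (simp_all add: cycle_edges_rotate1)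

lemma rotate_split:
  assumes ij: "i < j" "j < length xs" and no_wrap: "(j + 1) mod length xs \<noteq> i"
  obtains S Q where "rotate i xs = xs ! i # S @ Q" "S \<noteq> []" "Q \<noteq> []"
    "hd S = xs ! Suc i" "last S = xs ! j" "hd Q = xs ! ((j + 1) mod length xs)"
proof
  define S where "S = take (j - i) (drop (Suc i) xs)"
  define Q where "Q = drop (Suc j) xs @ take i xs"
  have "drop (Suc j) xs = drop (j - i) (drop (Suc i) xs)"
    using ij by simp
  then have "drop (Suc i) xs = S @ drop (Suc j) xs"
    unfolding S_def by (metis append_take_drop_id)
  then have "drop i xs = xs ! i # S @ drop (Suc j) xs"
    using ij by (metis Cons_nth_drop_Suc order.strict_trans)
  then show "rotate i xs = xs ! i # S @ Q"
    using ij by (simp add: rotate_drop_take Q_def)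
  show "S \<noteq> []" "hd S = xs ! Suc i" "last S = xs ! j"
    using ij by (auto simp: S_def hd_drop_conv_nth last_conv_nth)
  from ij have "xs \<noteq> []" "Suc j < length xs \<or> Suc j = length xs"
    by auto
  then show "Q \<noteq> []" "hd Q = xs ! ((j + 1) mod length xs)"
    using ij no_wrap by (auto simp: Q_def hd_append hd_drop_conv_nth hd_take hd_conv_nth[of xs])
qed

lemma segment_reversal_edges:
  assumes d: "distinct (a # S @ Q)" and S: "S \<noteq> []" and Q: "Q \<noteq> []"
  obtains R where "finite R"
    "cycle_edges (a # S @ Q) = insert {a, hd S} (insert {last S, hd Q} R)"
    "cycle_edges (a # rev S @ Q) = insert {a, last S} (insert {hd S, hd Q} R)"
    "{a, hd S} \<notin> R" "{last S, hd Q} \<notin> R" "{a, hd S} \<noteq> {last S, hd Q}"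
    "{a, last S} \<notin> R" "{hd S, hd Q} \<notin> R" "{a, last S} \<noteq> {hd S, hd Q}"
proof
  define R where "R = insert {last Q, a} (path_edges S \<union> path_edges Q)"
  show "finite R"
    by (simp add: R_def finite_path_edges)
  show "cycle_edges (a # S @ Q) = insert {a, hd S} (insert {last S, hd Q} R)"
    using S Q by (simp add: R_def cycle_edges_conv_path_edges path_edges_Cons path_edges_append)
  show "cycle_edges (a # rev S @ Q) = insert {a, last S} (insert {hd S, hd Q} R)"
    using S Q by (simp add: R_def cycle_edges_conv_path_edges path_edges_Cons path_edges_append
        path_edges_rev hd_rev last_rev)
  have ends: "hd S \<in> set S" "last S \<in> set S" "hd Q \<in> set Q" "last Q \<in> set Q"
    using S Q by auto
  have disj: "a \<notin> set S" "a \<notin> set Q" "set S \<inter> set Q = {}"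
    using d by auto
  have outside: "{x, y} \<notin> R \<and> {y, x} \<notin> R"
    if "x \<in> set S" "y \<in> insert a (set Q)" "x \<noteq> last Q" for x y
    using that disj path_edges_subset[of "{x, y}" S] path_edges_subset[of "{x, y}" Q]
    unfolding R_def by (auto simp: insert_commute doubleton_eq_iff)
  have "hd S \<noteq> last Q" "last S \<noteq> last Q"
    using ends disj by auto
  then show "{a, hd S} \<notin> R" "{last S, hd Q} \<notin> R" "{a, last S} \<notin> R" "{hd S, hd Q} \<notin> R"
    using outside ends by blast+
  show "{a, hd S} \<noteq> {last S, hd Q}" "{a, last S} \<noteq> {hd S, hd Q}"
    using ends disj by (auto simp: doubleton_eq_iff)
qed

section \<open>Uncrossing a cycle along a laminar family\<close>

definition crossing_edges :: "'a set \<Rightarrow> 'a set set \<Rightarrow> 'a set set" where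
  "crossing_edges A E = {e \<in> E. \<exists>x y. e = {x, y} \<and> x \<in> A \<and> y \<notin> A}"

lemma finite_crossing_edges: "finite E \<Longrightarrow> finite (crossing_edges A E)"
  by (simp add: crossing_edges_def)

lemma card_crossing_edges_insert:
  assumes "finite E" "{u, v} \<notin> E"
  shows "card (crossing_edges A (insert {u, v} E)) =
    card (crossing_edges A E) + of_bool (u \<in> A \<longleftrightarrow> v \<notin> A)"
proof -
  have "crossing_edges A (insert {u, v} E) =
      (if u \<in> A \<longleftrightarrow> v \<notin> A then insert {u, v} (crossing_edges A E) else crossing_edges A E)"
    by (auto simp: crossing_edges_def doubleton_eq_iff)
  moreover have "{u, v} \<notin> crossing_edges A E"
    using assms(2) by (simp add: crossing_edges_def)
  ultimately show ?thesis
    using assms(1) by (simp add: finite_crossing_edges)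
qed

definition laminar :: "'a set set \<Rightarrow> bool" where
  "laminar F \<longleftrightarrow> (\<forall>A \<in> F. \<forall>B \<in> F. A \<subseteq> B \<or> B \<subseteq> A \<or> A \<inter> B = {})"

lemma laminar_separated_pairs:
  assumes "laminar F" "A \<in> F" "B \<in> F"
    and "a \<in> A \<longleftrightarrow> c \<in> A" "b \<in> A \<longleftrightarrow> d \<in> A" "a \<in> A \<longleftrightarrow> b \<notin> A"
  shows "(a \<in> B \<longleftrightarrow> c \<in> B) \<or> (b \<in> B \<longleftrightarrow> d \<in> B)"
  using assms unfolding laminar_def by blast

lemma exchange_decreases_crossings:
  assumes F: "finite F" "laminar F" "A \<in> F"
    and R: "finite R" "{a, b} \<notin> R" "{c, d} \<notin> R" "{a, b} \<noteq> {c, d}"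
      "{a, c} \<notin> R" "{b, d} \<notin> R" "{a, c} \<noteq> {b, d}"
    and sides: "a \<in> A \<longleftrightarrow> c \<in> A" "b \<in> A \<longleftrightarrow> d \<in> A" "a \<in> A \<longleftrightarrow> b \<notin> A"
  shows "(\<Sum>B\<in>F. card (crossing_edges B (insert {a, c} (insert {b, d} R))))
       < (\<Sum>B\<in>F. card (crossing_edges B (insert {a, b} (insert {c, d} R))))"
proof (rule sum_strict_mono_ex1[OF \<open>finite F\<close>])
  have old: "card (crossing_edges B (insert {a, b} (insert {c, d} R))) = card (crossing_edges B R)
      + of_bool (a \<in> B \<longleftrightarrow> b \<notin> B) + of_bool (c \<in> B \<longleftrightarrow> d \<notin> B)"
    and new: "card (crossing_edges B (insert {a, c} (insert {b, d} R))) = card (crossing_edges B R)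
      + of_bool (a \<in> B \<longleftrightarrow> c \<notin> B) + of_bool (b \<in> B \<longleftrightarrow> d \<notin> B)" for B
    using R by (simp_all only: card_crossing_edges_insert finite_insert insert_iff simp_thms
        add.assoc)
  show "\<forall>B\<in>F. card (crossing_edges B (insert {a, c} (insert {b, d} R)))
      \<le> card (crossing_edges B (insert {a, b} (insert {c, d} R)))"
  proof
    fix B assume "B \<in> F"
    then have "(a \<in> B \<longleftrightarrow> c \<in> B) \<or> (b \<in> B \<longleftrightarrow> d \<in> B)"
      using laminar_separated_pairs[OF F(2,3) _ sides] by blast
    then show "card (crossing_edges B (insert {a, c} (insert {b, d} R)))
        \<le> card (crossing_edges B (insert {a, b} (insert {c, d} R)))"
      unfolding old new by (cases "a \<in> B"; cases "b \<in> B"; cases "c \<in> B") auto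
  qed
  show "\<exists>B\<in>F. card (crossing_edges B (insert {a, c} (insert {b, d} R)))
      < card (crossing_edges B (insert {a, b} (insert {c, d} R)))"
  proof
    show "card (crossing_edges A (insert {a, c} (insert {b, d} R)))
        < card (crossing_edges A (insert {a, b} (insert {c, d} R)))"
      using sides unfolding old new by (cases "a \<in> A") auto
  qed (fact \<open>A \<in> F\<close>)
qed

lemma pigeonhole_two_agreeing:
  fixes I :: "'a::linorder set"
  assumes "finite I" "3 \<le> card I"
  obtains i j where "i \<in> I" "j \<in> I" "i < j" "P i \<longleftrightarrow> P j"
proof -
  have "card (P ` I) \<le> card (UNIV :: bool set)"
    by (rule card_mono) auto
  then have "card (P ` I) < card I"
    using assms(2) by simp
  then have "\<not> inj_on P I"
    by (rule pigeonhole)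
  then obtain x y where "x \<in> I" "y \<in> I" "x \<noteq> y" "P x = P y"
    unfolding inj_on_def by blast
  then show thesis
    using that[of x y] that[of y x] by (cases "x < y") auto
qed

lemma rotate_cycle_at_parallel_crossings:
  assumes many: "3 \<le> card (crossing_edges A (cycle_edges cs \<inter> EK))"
  obtains m a S Q where "rotate m cs = a # S @ Q" "S \<noteq> []" "Q \<noteq> []"
    "{a, hd S} \<in> EK" "{last S, hd Q} \<in> EK"
    "a \<in> A \<longleftrightarrow> last S \<in> A" "hd S \<in> A \<longleftrightarrow> hd Q \<in> A" "a \<in> A \<longleftrightarrow> hd S \<notin> A"
proof -
  define n where "n = length cs"
  define f where "f i = {cs ! i, cs ! ((i + 1) mod n)}" for i
  define I where "I = {i. i < n \<and> f i \<in> EK \<and> (cs ! i \<in> A \<longleftrightarrow> cs ! ((i + 1) mod n) \<notin> A)}"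
  have "crossing_edges A (cycle_edges cs \<inter> EK) \<subseteq> f ` I"
  proof
    fix e assume "e \<in> crossing_edges A (cycle_edges cs \<inter> EK)"
    then obtain i x y where i: "i < n" "e = f i" "e \<in> EK" "e = {x, y}" "x \<in> A" "y \<notin> A"
      unfolding crossing_edges_def cycle_edges_def f_def n_def by blast
    moreover have "cs ! i \<in> A \<longleftrightarrow> cs ! ((i + 1) mod n) \<notin> A"
      using i(2,4-6) unfolding f_def by (auto simp: doubleton_eq_iff)
    ultimately have "i \<in> I"
      unfolding I_def by simp
    then show "e \<in> f ` I"
      using i(2) by blast
  qed
  moreover have "finite I"
    unfolding I_def by simp
  ultimately have "card (crossing_edges A (cycle_edges cs \<inter> EK)) \<le> card (f ` I)"
    by (intro card_mono) simp_all
  also have "\<dots> \<le> card I"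
    using \<open>finite I\<close> by (rule card_image_le)
  finally have "3 \<le> card I"
    using many by linarith
  then obtain i j where ij: "i \<in> I" "j \<in> I" "i < j" "cs ! i \<in> A \<longleftrightarrow> cs ! j \<in> A"
    using pigeonhole_two_agreeing[OF \<open>finite I\<close>, of "\<lambda>i. cs ! i \<in> A"] by blast
  \<comment> \<open>consecutive crossing edges leave \<open>A\<close> in opposite directions\<close>
  then have "(j + 1) mod n \<noteq> i"
    unfolding I_def by auto
  then obtain S Q where "rotate i cs = cs ! i # S @ Q" "S \<noteq> []" "Q \<noteq> []"
      "hd S = cs ! Suc i" "last S = cs ! j" "hd Q = cs ! ((j + 1) mod n)"
    using rotate_split[of i j cs] ij unfolding I_def n_def by blast
  moreover have "Suc i mod n = Suc i"
    using ij unfolding I_def by simp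
  ultimately show thesis
    using that[of i "cs ! i" S Q] ij unfolding I_def f_def by auto
qed

definition clique :: "'a set set \<Rightarrow> 'a set \<Rightarrow> bool" where
  "clique E K \<longleftrightarrow> (\<forall>x \<in> K. \<forall>y \<in> K. x \<noteq> y \<longrightarrow> {x, y} \<in> E)"

definition crossing_potential :: "'a set set \<Rightarrow> 'a set set \<Rightarrow> 'a list \<Rightarrow> nat" where
  "crossing_potential F EK cs = (\<Sum>A\<in>F. card (crossing_edges A (cycle_edges cs \<inter> EK)))"

lemma is_cycle_rotate: "is_cycle V E (rotate n cs) \<longleftrightarrow> is_cycle V E cs"
  by (simp add: is_cycle_iff_cycle_edges cycle_edges_rotate)

lemma segment_reversal_in_clique:
  assumes cyc: "is_cycle V E (a # S @ Q)" and SQ: "S \<noteq> []" "Q \<noteq> []" and K: "clique E K"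
    and old: "{a, hd S} \<in> edges_within E K" "{last S, hd Q} \<in> edges_within E K"
  shows "{a, last S} \<in> edges_within E K" "{hd S, hd Q} \<in> edges_within E K"
    and "is_cycle V E (a # rev S @ Q)"
proof -
  have d: "distinct (a # S @ Q)"
    using cyc unfolding is_cycle_iff_cycle_edges by (elim conjE)
  have "last S \<in> set S" "hd S \<in> set S" "hd Q \<in> set Q"
    using SQ by auto
  then have "a \<noteq> last S" "hd S \<noteq> hd Q"
    using d by auto
  moreover have "a \<in> K" "hd S \<in> K" "last S \<in> K" "hd Q \<in> K"
    using old unfolding edges_within_def by auto
  ultimately show new: "{a, last S} \<in> edges_within E K" "{hd S, hd Q} \<in> edges_within E K"
    using K unfolding clique_def edges_within_def by simp_all
  have "cycle_edges (a # rev S @ Q) \<subseteq> insert {a, last S} (insert {hd S, hd Q} (cycle_edges (a # S @ Q)))"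
    by (rule segment_reversal_edges[OF d SQ]) auto
  then show "is_cycle V E (a # rev S @ Q)"
    using cyc d new unfolding is_cycle_iff_cycle_edges edges_within_def by auto
qed

lemma segment_reversal_decreases_crossing_potential:
  assumes cyc: "is_cycle V E cs" and K: "clique E K"
    and F: "finite F" "laminar F" "A \<in> F"
    and many: "3 \<le> card (crossing_edges A (cycle_edges cs \<inter> edges_within E K))"
  obtains cs' where "is_cycle V E cs'" "length cs' = length cs"
    "cycle_edges cs' - edges_within E K = cycle_edges cs - edges_within E K"
    "crossing_potential F (edges_within E K) cs' < crossing_potential F (edges_within E K) cs"
proof -
  let ?EK = "edges_within E K"
  obtain m a S Q where rot: "rotate m cs = a # S @ Q" and SQ: "S \<noteq> []" "Q \<noteq> []"
    and old: "{a, hd S} \<in> ?EK" "{last S, hd Q} \<in> ?EK"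
    and sides: "a \<in> A \<longleftrightarrow> last S \<in> A" "hd S \<in> A \<longleftrightarrow> hd Q \<in> A" "a \<in> A \<longleftrightarrow> hd S \<notin> A"
    using rotate_cycle_at_parallel_crossings[OF many] by blast
  have cyc_rot: "is_cycle V E (a # S @ Q)"
    using cyc by (simp flip: rot add: is_cycle_rotate)
  note new = segment_reversal_in_clique[OF cyc_rot SQ K old]
  have d: "distinct (a # S @ Q)"
    using cyc_rot unfolding is_cycle_iff_cycle_edges by (elim conjE)
  obtain R where R: "finite R"
    "cycle_edges (a # S @ Q) = insert {a, hd S} (insert {last S, hd Q} R)"
    "cycle_edges (a # rev S @ Q) = insert {a, last S} (insert {hd S, hd Q} R)"
    "{a, hd S} \<notin> R" "{last S, hd Q} \<notin> R" "{a, hd S} \<noteq> {last S, hd Q}"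
    "{a, last S} \<notin> R" "{hd S, hd Q} \<notin> R" "{a, last S} \<noteq> {hd S, hd Q}"
    using segment_reversal_edges[OF d SQ] by blast
  have edges: "cycle_edges cs = insert {a, hd S} (insert {last S, hd Q} R)"
    using R(2) rot by (metis cycle_edges_rotate)
  show thesis
  proof (rule that[of "a # rev S @ Q"])
    show "is_cycle V E (a # rev S @ Q)" "length (a # rev S @ Q) = length cs"
      using new(3) arg_cong[OF rot, of length] by simp_all
    show "cycle_edges (a # rev S @ Q) - ?EK = cycle_edges cs - ?EK"
      unfolding edges R(3) using old new by auto
    have "cycle_edges cs \<inter> ?EK = insert {a, hd S} (insert {last S, hd Q} (R \<inter> ?EK))"
      "cycle_edges (a # rev S @ Q) \<inter> ?EK = insert {a, last S} (insert {hd S, hd Q} (R \<inter> ?EK))"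
      unfolding edges R(3) using old new by auto
    moreover have "finite (R \<inter> ?EK)"
      using R(1) by simp
    ultimately show "crossing_potential F ?EK (a # rev S @ Q) < crossing_potential F ?EK cs"
      unfolding crossing_potential_def
      using exchange_decreases_crossings[OF F, of "R \<inter> ?EK" a "hd S" "last S" "hd Q"] R(4-9) sides
      by simp
  qed
qed

lemma cycle_uncrossing:
  assumes cyc: "is_cycle V E C" and K: "clique E K" and F: "finite F" "laminar F"
  obtains C' where "is_cycle V E C'" "length C' = length C"
    "cycle_edges C' - edges_within E K = cycle_edges C - edges_within E K"
    "\<forall>A \<in> F. card (crossing_edges A (cycle_edges C' \<inter> edges_within E K)) \<le> 2"
proof -
  let ?EK = "edges_within E K"
  define admissible where "admissible cs \<longleftrightarrow>
      is_cycle V E cs \<and> length cs = length C \<and> cycle_edges cs - ?EK = cycle_edges C - ?EK" for cs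
  obtain C' where C': "admissible C'"
    and least: "\<And>cs. admissible cs \<Longrightarrow> crossing_potential F ?EK C' \<le> crossing_potential F ?EK cs"
    using ex_has_least_nat[of admissible C "crossing_potential F ?EK"] cyc
    unfolding admissible_def by blast
  have "card (crossing_edges A (cycle_edges C' \<inter> ?EK)) \<le> 2" if A: "A \<in> F" for A
  proof (rule ccontr)
    assume "\<not> ?thesis"
    then have "3 \<le> card (crossing_edges A (cycle_edges C' \<inter> ?EK))"
      by simp
    moreover have "is_cycle V E C'"
      using C' unfolding admissible_def by blast
    ultimately obtain cs' where "is_cycle V E cs'" "length cs' = length C'"
      "cycle_edges cs' - ?EK = cycle_edges C' - ?EK"
      and smaller: "crossing_potential F ?EK cs' < crossing_potential F ?EK C'"
      using segment_reversal_decreases_crossing_potential[OF _ K F A] by blast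
    then have "admissible cs'"
      using C' unfolding admissible_def by simp
    then show False
      using least smaller by (simp add: leD)
  qed
  then show thesis
    using that C' unfolding admissible_def by blast
qed

section \<open>Forgotten vertices of a tree decomposition\<close>

lemma funpow_fixed_point: "f x = x \<Longrightarrow> (f ^^ n) x = x"
  by (induction n) auto

lemma rooted_tree_funpow_in:
  "rooted_tree N r par \<Longrightarrow> t \<in> N \<Longrightarrow> (par ^^ k) t \<in> N"
  by (induction k) (auto simp: rooted_tree_def)

lemma descendants_trans:
  assumes "s \<in> descendants N par t" "t \<in> descendants N par t'"
  shows "s \<in> descendants N par t'"
proof -
  obtain a b where "s \<in> N" "(par ^^ a) s = t" "(par ^^ b) t = t'"
    using assms unfolding descendants_def by blast
  then have "(par ^^ (b + a)) s = t'"
    by (simp add: funpow_add)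
  with \<open>s \<in> N\<close> show ?thesis
    unfolding descendants_def by blast
qed

lemma descendants_antisym:
  assumes rt: "rooted_tree N r par"
    and "t \<in> descendants N par t'" "t' \<in> descendants N par t"
  shows "t = t'"
proof -
  obtain a b where t: "t \<in> N" and a: "(par ^^ a) t = t'" and b: "(par ^^ b) t' = t"
    using assms(2,3) unfolding descendants_def by blast
  obtain K where K: "(par ^^ K) t = r" and root: "par r = r"
    using rt t unfolding rooted_tree_def by blast
  show ?thesis
  proof (cases "b + a = 0")
    case True
    then show ?thesis using a by simp
  next
    case False
    have period: "(par ^^ (b + a)) t = t"
      using a b by (simp add: funpow_add)
    have "K \<le> K * (b + a)"
      using False by (cases "b + a") auto
    have "t = (par ^^ (K * (b + a))) t"
      using funpow_mod_eq[OF period, of "K * (b + a)"] by simp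
    also have "\<dots> = (par ^^ (K * (b + a) - K)) ((par ^^ K) t)"
      using \<open>K \<le> K * (b + a)\<close> by (metis funpow_add le_add_diff_inverse2 o_apply)
    also have "\<dots> = r"
      using K root by (simp add: funpow_fixed_point)
    finally show ?thesis
      using a root by (simp add: funpow_fixed_point)
  qed
qed

lemma common_descendant_comparable:
  assumes rt: "rooted_tree N r par"
    and "u \<in> descendants N par t" "u \<in> descendants N par t'"
  shows "t \<in> descendants N par t' \<or> t' \<in> descendants N par t"
proof -
  obtain a b where u: "u \<in> N" and a: "(par ^^ a) u = t" and b: "(par ^^ b) u = t'"
    using assms(2,3) unfolding descendants_def by blast
  have "t \<in> N" "t' \<in> N"
    using rooted_tree_funpow_in[OF rt u] a b by blast+
  consider "a \<le> b" | "b \<le> a"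
    by linarith
  then show ?thesis
  proof cases
    case 1
    then have "(par ^^ (b - a)) t = t'"
      using a b by (metis funpow_add le_add_diff_inverse2 o_apply)
    then show ?thesis
      using \<open>t \<in> N\<close> unfolding descendants_def by blast
  next
    case 2
    then have "(par ^^ (a - b)) t' = t"
      using a b by (metis funpow_add le_add_diff_inverse2 o_apply)
    then show ?thesis
      using \<open>t' \<in> N\<close> unfolding descendants_def by blast
  qed
qed

lemma walk_exits:
  assumes "walk E xs" "xs \<noteq> []" "hd xs \<in> D" "last xs \<notin> D"
  obtains i where "Suc i < length xs" "xs ! i \<in> D" "xs ! Suc i \<notin> D" "{xs ! i, xs ! Suc i} \<in> E"
proof -
  have "\<exists>k. k < length xs \<and> xs ! k \<notin> D"
    using assms(2,4) by (metis diff_less last_conv_nth length_greater_0_conv zero_less_one)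
  then obtain k where k: "k < length xs" "xs ! k \<notin> D" and before: "\<forall>i < k. xs ! i \<in> D"
    by (auto simp: exists_least_iff[of "\<lambda>k. k < length xs \<and> xs ! k \<notin> D"])
  have "k \<noteq> 0"
    using k assms(2,3) by (metis hd_conv_nth)
  then obtain j where "k = Suc j"
    using not0_implies_Suc by blast
  then show ?thesis
    using that[of j] k before assms(1) unfolding walk_def by simp
qed

lemma tree_edge_leaving_descendants:
  assumes rt: "rooted_tree N r par" and e: "{p, q} \<in> tree_edges N r par"
    and p: "p \<in> descendants N par t" and q: "q \<notin> descendants N par t"
  shows "p = t"
proof -
  obtain v where v: "{p, q} = {v, par v}" "v \<in> N"
    using e unfolding tree_edges_def by blast
  have "par v \<in> N"
    using rt v(2) unfolding rooted_tree_def by blast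
  from v(1) consider "p = v" "q = par v" | "p = par v" "q = v"
    by (auto simp: doubleton_eq_iff)
  then show ?thesis
  proof cases
    case 1
    obtain k where k: "(par ^^ k) v = t"
      using p 1 unfolding descendants_def by blast
    show ?thesis
    proof (cases k)
      case (Suc k')
      then have "(par ^^ k') q = t"
        using k 1 by (simp add: funpow_Suc_right del: funpow.simps)
      then show ?thesis
        using q 1 \<open>par v \<in> N\<close> unfolding descendants_def by blast
    qed (use k 1 in simp)
  next
    case 2
    then obtain k where "(par ^^ Suc k) q = t"
      using p unfolding descendants_def by (auto simp: funpow_Suc_right simp del: funpow.simps)
    then show ?thesis
      using q 2 v(2) unfolding descendants_def by blast
  qed
qed

lemma tree_decomposition_rooted_tree:
  "tree_decomposition V E N r par bag \<Longrightarrow> rooted_tree N r par"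
  by (simp add: tree_decomposition_def)

lemma gamma_mono:
  assumes "t \<in> descendants N par t'"
  shows "gamma N par bag t \<subseteq> gamma N par bag t'"
  unfolding gamma_def using descendants_trans[OF _ assms] by (intro UN_mono) auto

lemma forgotten_vertex_bags_below:
  assumes td: "tree_decomposition V E N r par bag"
    and x: "x \<in> gamma N par bag t" "x \<notin> bag t"
    and u: "u \<in> N" "x \<in> bag u"
  shows "u \<in> descendants N par t"
proof (rule ccontr)
  assume u_outside: "u \<notin> descendants N par t"
  obtain w where w: "w \<in> descendants N par t" "x \<in> bag w"
    using x(1) unfolding gamma_def by blast
  have "w \<in> N"
    using w(1) unfolding descendants_def by blast
  then have "x \<in> V"
    using td w(2) unfolding tree_decomposition_def by blast
  then have "connected_in (tree_edges N r par) {s \<in> N. x \<in> bag s}"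
    using td unfolding tree_decomposition_def by blast
  then obtain xs where xs: "xs \<noteq> []" "hd xs = w" "last xs = u"
      "set xs \<subseteq> {s \<in> N. x \<in> bag s}" "walk (tree_edges N r par) xs"
    using u \<open>w \<in> N\<close> w(2) unfolding connected_in_def by blast
  moreover have "hd xs \<in> descendants N par t" "last xs \<notin> descendants N par t"
    using xs(2,3) w(1) u_outside by simp_all
  ultimately obtain i where i: "Suc i < length xs" "xs ! i \<in> descendants N par t"
      "xs ! Suc i \<notin> descendants N par t" "{xs ! i, xs ! Suc i} \<in> tree_edges N r par"
    by (meson walk_exits)
  then have "xs ! i = t"
    using tree_edge_leaving_descendants[OF tree_decomposition_rooted_tree[OF td]] by blast
  moreover have "xs ! i \<in> set xs"
    using i(1) by simp
  ultimately show False
    using xs(4) x(2) by auto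
qed

lemma forgotten_set_mono:
  assumes td: "tree_decomposition V E N r par bag" and t: "t \<in> descendants N par t'" "t' \<in> N"
  shows "gamma N par bag t - bag t \<subseteq> gamma N par bag t' - bag t'"
proof
  fix x assume x: "x \<in> gamma N par bag t - bag t"
  have "x \<notin> bag t'"
  proof
    assume "x \<in> bag t'"
    then have "t' \<in> descendants N par t"
      using forgotten_vertex_bags_below[OF td] x t(2) by blast
    then have "t = t'"
      using descendants_antisym[OF tree_decomposition_rooted_tree[OF td] t(1)] by blast
    then show False
      using x \<open>x \<in> bag t'\<close> by blast
  qed
  then show "x \<in> gamma N par bag t' - bag t'"
    using x gamma_mono[OF t(1), of bag] by blast
qed

lemma laminar_forgotten_sets:
  assumes td: "tree_decomposition V E N r par bag"
  shows "laminar ((\<lambda>t. gamma N par bag t - bag t) ` N)"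
  unfolding laminar_def
proof (intro ballI)
  fix A B assume "A \<in> (\<lambda>t. gamma N par bag t - bag t) ` N" "B \<in> (\<lambda>t. gamma N par bag t - bag t) ` N"
  then obtain t t' where t: "t \<in> N" "t' \<in> N"
    and A: "A = gamma N par bag t - bag t" and B: "B = gamma N par bag t' - bag t'"
    by blast
  show "A \<subseteq> B \<or> B \<subseteq> A \<or> A \<inter> B = {}"
  proof (cases "A \<inter> B = {}")
    case False
    then obtain x u where x: "x \<in> A" "x \<in> B" and u: "u \<in> descendants N par t" "x \<in> bag u"
      unfolding A gamma_def by blast
    have "u \<in> N"
      using u(1) unfolding descendants_def by blast
    then have "u \<in> descendants N par t'"
      using forgotten_vertex_bags_below[OF td] x(2) u(2) unfolding B by blast
    then have "t \<in> descendants N par t' \<or> t' \<in> descendants N par t"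
      using common_descendant_comparable[OF tree_decomposition_rooted_tree[OF td] u(1)] by blast
    then show ?thesis
      using forgotten_set_mono[OF td _ t(1)] forgotten_set_mono[OF td _ t(2)] unfolding A B by blast
  qed simp
qed

section \<open>Special cliques and fake vertices\<close>

lemma bipartite_edge_sides:
  assumes "bipartite_graph W U EB" "{x, y} \<in> EB"
  shows "x \<in> W \<and> y \<in> U \<or> x \<in> U \<and> y \<in> W"
proof -
  obtain w u where "{x, y} = {w, u}" "w \<in> W" "u \<in> U"
    using assms unfolding bipartite_graph_def by blast
  then show ?thesis
    by (auto simp: doubleton_eq_iff)
qed

lemma special_clique:
  assumes bip: "bipartite_graph W U EB" and s: "s \<in> U"
  shows "clique (half_square_edges W EB) (nbhd EB s)"
  unfolding clique_def
proof (intro ballI impI)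
  have disj: "W \<inter> U = {}"
    using bip unfolding bipartite_graph_def by blast
  fix x y assume xy: "x \<in> nbhd EB s" "y \<in> nbhd EB s" "x \<noteq> y"
  then have edges: "{x, s} \<in> EB" "{s, y} \<in> EB"
    unfolding nbhd_def by (auto simp: insert_commute)
  then have "x \<in> W" "y \<in> W"
    using bipartite_edge_sides[OF bip] s disj by blast+
  moreover have "{x, y} \<notin> EB"
    using bipartite_edge_sides[OF bip, of x y] \<open>x \<in> W\<close> \<open>y \<in> W\<close> disj by blast
  ultimately show "{x, y} \<in> half_square_edges W EB"
    unfolding half_square_edges_def using xy(3) edges by blast
qed

lemma Fake_subset_forgotten: "Fake W U EB N par bag t \<subseteq> gamma N par bag t - bag t"
  unfolding Fake_def derived_bag_def by auto

lemma gamma_subset_gamma_derived: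
  "gamma N par bag t \<inter> W \<subseteq> gamma N par (derived_bag W U EB N par bag) t"
  unfolding gamma_def derived_bag_def by auto

lemma Fake_edges_subset_crossing_edges:
  "{e \<in> X. \<exists>x y. e = {x, y} \<and> x \<in> Fake W U EB N par bag t \<inter> K \<and>
       y \<in> W - gamma N par (derived_bag W U EB N par bag) t}
     \<subseteq> crossing_edges (gamma N par bag t - bag t) X"
proof (intro subsetI)
  fix e assume "e \<in> {e \<in> X. \<exists>x y. e = {x, y} \<and> x \<in> Fake W U EB N par bag t \<inter> K \<and>
       y \<in> W - gamma N par (derived_bag W U EB N par bag) t}"
  then obtain x y where "e \<in> X" "e = {x, y}" "x \<in> Fake W U EB N par bag t"
      "y \<in> W" "y \<notin> gamma N par (derived_bag W U EB N par bag) t"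
    by blast
  moreover have "x \<in> gamma N par bag t - bag t"
    using Fake_subset_forgotten \<open>x \<in> Fake W U EB N par bag t\<close> by (rule subsetD)
  moreover have "y \<notin> gamma N par bag t"
    using \<open>y \<in> W\<close> \<open>y \<notin> gamma N par (derived_bag W U EB N par bag) t\<close>
      gamma_subset_gamma_derived[of N par bag t W U EB] by (meson IntI subsetD)
  ultimately show "e \<in> crossing_edges (gamma N par bag t - bag t) X"
    unfolding crossing_edges_def by auto
qed

lemma card_Fake_edges_le:
  assumes "finite X"
  shows "card {e \<in> X. \<exists>x y. e = {x, y} \<and> x \<in> Fake W U EB N par bag t \<inter> K \<and>
       y \<in> W - gamma N par (derived_bag W U EB N par bag) t}
     \<le> card (crossing_edges (gamma N par bag t - bag t) X)"
  using card_mono[OF finite_crossing_edges[OF assms] Fake_edges_subset_crossing_edges] .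

theorem lemma26:
  fixes W U :: "'v set" and EB :: "'v set set"
    and N :: "'n set" and r :: 'n and par :: "'n \<Rightarrow> 'n" and bag :: "'n \<Rightarrow> 'v set"
    and k :: nat and C :: "'v list" and s :: 'v
  assumes bip: "bipartite_graph W U EB"
    and planar: "planar_graph (W \<union> U) EB"
    and k_pos: "k > 0"
    and nice: "nice_tree_decomposition (W \<union> U) EB N r par bag"
    and width: "td_width N bag < 5 * sqrt (2 * real k)"
    and cyc: "is_cycle W (half_square_edges W EB) C"
    and s_special: "s \<in> U"
  shows "\<exists>C'. is_cycle W (half_square_edges W EB) C' \<and>
           cycle_length C' = cycle_length C \<and>
           cycle_edges C' - edges_within (half_square_edges W EB) (nbhd EB s) =
             cycle_edges C - edges_within (half_square_edges W EB) (nbhd EB s) \<and>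
           (\<forall>t \<in> N.
              card {e \<in> cycle_edges C' \<inter> edges_within (half_square_edges W EB) (nbhd EB s).
                      \<exists>x y. e = {x, y} \<and> x \<in> Fake W U EB N par bag t \<inter> nbhd EB s \<and>
                            y \<in> W - gamma N par (derived_bag W U EB N par bag) t} \<le> 4)"
proof -
  let ?G = "half_square_edges W EB" and ?K = "nbhd EB s"
  let ?EK = "edges_within ?G ?K"
  let ?F = "(\<lambda>t. gamma N par bag t - bag t) ` N"
  have td: "tree_decomposition (W \<union> U) EB N r par bag"
    using nice by (simp add: nice_tree_decomposition_def)
  then have "finite ?F"
    using tree_decomposition_rooted_tree[OF td] by (simp add: rooted_tree_def)
  then obtain C' where C': "is_cycle W ?G C'" "length C' = length C"
      "cycle_edges C' - ?EK = cycle_edges C - ?EK"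
    and few: "\<forall>A \<in> ?F. card (crossing_edges A (cycle_edges C' \<inter> ?EK)) \<le> 2"
    by (rule cycle_uncrossing[OF cyc special_clique[OF bip s_special] _ laminar_forgotten_sets[OF td]])
  have "finite (cycle_edges C' \<inter> ?EK)"
    by (simp add: finite_cycle_edges)
  then show ?thesis
    unfolding cycle_length_def using few
    by (intro exI[of _ C'] conjI ballI C' order.trans[OF card_Fake_edges_le]) auto
qed

end
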